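(* Let $V$ be a finite-dimensional subspace of the space of differential $k$-forms on $T^n$, and let $W_d$ ($0\le d\le n$) be subspaces with $V_d=W_d\oplus V_{d+1}$. Then the geometric decomposition map $\mathcal D:V\to\bigoplus_{d=0}^n\bigoplus_{F\subseteq T^n,\ \dim F=d}\mathring V(F)$ is injective.
   Context: $T^n\subset\mathbb R^{n+1}$ is the standard simplex $\{\lambda_i\ge0,\ \sum\lambda_i=1\}$. For a face $F$, $V(F)=\mathrm{tr}_{T^n,F}(V)$ (pullback to $F$) and $\mathring V(F)$ is the subspace of $V(F)$ of forms whose trace on $\partial F$ vanishes. $V_d$ ($0\le d\le n+1$) is the subspace of $V$ of forms whose traces vanish on all $(d-1)$-dimensional faces of $T^n$ ($V_0=V$, $V_{n+1}=0$). $\mathcal D$ is the linear map defined on $W_d$ by $\alpha\mapsto\bigoplus_{\dim F=d}\mathrm{tr}_{T^n,F}\alpha$ and extended linearly to $V=W_0\oplus\dots\oplus W_n$ (the trace of $\alpha\in W_d$ on a $d$-face lies in $\mathring V(F)$). *)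

theory Defs
  imports "HOL-Analysis.Analysis"
begin

text \<open>Ambient space R^(n+1) is real^'m with CARD('m) = n+1; the simplex T^n lives in it.
 A (differential) k-form on T^n is represented as a function
 omega x vs  (x a point, vs j for j<k the argument vectors).\<close>

type_synonym 'm form = "real^'m \<Rightarrow> (nat \<Rightarrow> real^'m) \<Rightarrow> real"

definition simplex_face :: "'m::finite set \<Rightarrow> (real^'m) set" where
  "simplex_face S = {x. (\<forall>i. 0 \<le> x$i) \<and> (\<Sum>i\<in>UNIV. x$i) = 1 \<and> (\<forall>i. i \<notin> S \<longrightarrow> x$i = 0)}"

definition std_simplex :: "(real^'m::finite) set" where
  "std_simplex = simplex_face UNIV"

definition face_tangent :: "'m::finite set \<Rightarrow> (real^'m) set" where
  "face_tangent S = {v. (\<forall>i. i \<notin> S \<longrightarrow> v$i = 0) \<and> (\<Sum>i\<in>UNIV. v$i) = 0}"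

definition is_face :: "'m::finite set \<Rightarrow> bool" where
  "is_face S \<longleftrightarrow> S \<noteq> {}"

definition face_dim :: "'m::finite set \<Rightarrow> nat" where
  "face_dim S = card S - 1"

text \<open>k-forms on T^n: at each point of T^n an alternating k-linear form on the tangent
 space of T^n; (extensionally) zero off T^n / off tangent arguments, and depending only on
 the first k argument vectors.\<close>
definition is_kform :: "nat \<Rightarrow> 'm::finite form \<Rightarrow> bool" where
  "is_kform k \<omega> \<longleftrightarrow>
     (\<forall>x vs. (x \<notin> std_simplex \<or> (\<exists>j<k. vs j \<notin> face_tangent UNIV)) \<longrightarrow> \<omega> x vs = 0) \<and>
     (\<forall>x vs vs'. (\<forall>j<k. vs j = vs' j) \<longrightarrow> \<omega> x vs = \<omega> x vs') \<and>
     (\<forall>x\<in>std_simplex. \<forall>vs. \<forall>j<k. \<forall>a b u w.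
        (\<forall>i<k. vs i \<in> face_tangent UNIV) \<and> u \<in> face_tangent UNIV \<and> w \<in> face_tangent UNIV \<longrightarrow>
        \<omega> x (vs(j := a *\<^sub>R u + b *\<^sub>R w)) = a * \<omega> x (vs(j := u)) + b * \<omega> x (vs(j := w))) \<and>
     (\<forall>x vs i j. i < k \<and> j < k \<and> i \<noteq> j \<and> vs i = vs j \<longrightarrow> \<omega> x vs = 0)"

definition zero_form :: "'m::finite form" where
  "zero_form = (\<lambda>x vs. 0)"

definition add_form :: "'m::finite form \<Rightarrow> 'm form \<Rightarrow> 'm form" where
  "add_form f g = (\<lambda>x vs. f x vs + g x vs)"

definition scale_form :: "real \<Rightarrow> 'm::finite form \<Rightarrow> 'm form" where
  "scale_form c f = (\<lambda>x vs. c * f x vs)"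

definition form_subspace :: "nat \<Rightarrow> 'm::finite form set \<Rightarrow> bool" where
  "form_subspace k V \<longleftrightarrow> (\<forall>\<omega>\<in>V. is_kform k \<omega>) \<and> zero_form \<in> V \<and>
     (\<forall>f\<in>V. \<forall>g\<in>V. add_form f g \<in> V) \<and> (\<forall>c. \<forall>f\<in>V. scale_form c f \<in> V)"

definition form_span :: "'m::finite form set \<Rightarrow> 'm form set" where
  "form_span B = {\<omega>. \<exists>c. \<omega> = (\<lambda>x vs. \<Sum>b\<in>B. c b * b x vs)}"

definition fin_dim_form_subspace :: "nat \<Rightarrow> 'm::finite form set \<Rightarrow> bool" where
  "fin_dim_form_subspace k V \<longleftrightarrow> form_subspace k V \<and> (\<exists>B. finite B \<and> B \<subseteq> V \<and> V = form_span B)"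

text \<open>Trace (pullback) of a k-form to the face F_S: restriction to points of F_S and to
 tangent vectors of F_S (extended by zero).\<close>
definition trace_form :: "nat \<Rightarrow> 'm::finite set \<Rightarrow> 'm form \<Rightarrow> 'm form" where
  "trace_form k S \<omega> = (\<lambda>x vs. if x \<in> simplex_face S \<and> (\<forall>j<k. vs j \<in> face_tangent S) then \<omega> x vs else 0)"

definition Vsub :: "nat \<Rightarrow> 'm::finite form set \<Rightarrow> nat \<Rightarrow> 'm form set" where
  "Vsub k V d = {\<omega>\<in>V. \<forall>S. is_face S \<and> face_dim S + 1 = d \<longrightarrow> trace_form k S \<omega> = zero_form}"

definition direct_sum_eq :: "nat \<Rightarrow> 'm::finite form set \<Rightarrow> 'm form set \<Rightarrow> 'm form set \<Rightarrow> bool" where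
  "direct_sum_eq k C A B \<longleftrightarrow> form_subspace k A \<and> form_subspace k B \<and> A \<inter> B = {zero_form} \<and>
     C = {add_form a b | a b. a \<in> A \<and> b \<in> B}"

text \<open>Geometric decomposition map: write alpha = w_0 + ... + w_n with w_d in W_d
 (unique since V = W_0 (+) ... (+) W_n) and send alpha to the family of traces
 tr_F w_(dim F) indexed by the faces F (the zero family component is used for non-faces).\<close>
definition W_components :: "nat \<Rightarrow> (nat \<Rightarrow> 'm::finite form set) \<Rightarrow> 'm form \<Rightarrow> (nat \<Rightarrow> 'm form)" where
  "W_components n W \<alpha> = (THE w. (\<forall>d\<le>n. w d \<in> W d) \<and> (\<forall>d>n. w d = zero_form) \<and>
                              \<alpha> = (\<lambda>x vs. \<Sum>d\<le>n. w d x vs))"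

definition geom_decomp :: "nat \<Rightarrow> nat \<Rightarrow> (nat \<Rightarrow> 'm::finite form set) \<Rightarrow> 'm form \<Rightarrow> ('m set \<Rightarrow> 'm form)" where
  "geom_decomp k n W \<alpha> = (\<lambda>S. if is_face S then trace_form k S (W_components n W \<alpha> (face_dim S)) else zero_form)"

end

theory Submission
  imports Defs
begin

text \<open>Since \<open>V\<^sub>0 = V\<close>, \<open>V\<^sub>n\<^sub>+\<^sub>1 = 0\<close> (the trace of a form on \<open>T\<^sup>n\<close> itself is the form) and
  \<open>V\<^sub>d = W\<^sub>d \<oplus> V\<^sub>d\<^sub>+\<^sub>1\<close>, every \<open>\<alpha> \<in> V\<close> splits uniquely as \<open>\<alpha> = w\<^sub>0 + \<dots> + w\<^sub>n\<close> with \<open>w\<^sub>d \<in> W\<^sub>d\<close>,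
  so \<open>\<D>\<close> is well defined. If \<open>\<D> \<alpha> = \<D> \<beta>\<close>, then for each \<open>d\<close> the difference of the \<open>d\<close>-th
  components lies in \<open>W\<^sub>d\<close> and has vanishing trace on every \<open>d\<close>-face, i.e. it lies in
  \<open>W\<^sub>d \<inter> V\<^sub>d\<^sub>+\<^sub>1 = 0\<close>. Hence all components agree and \<open>\<alpha> = \<beta>\<close>.\<close>

definition diff_form :: "'m::finite form \<Rightarrow> 'm form \<Rightarrow> 'm form" where
  "diff_form f g = (\<lambda>x vs. f x vs - g x vs)"

lemma diff_form_eq_zero_iff: "diff_form f g = zero_form \<longleftrightarrow> f = g"
  by (auto simp: diff_form_def zero_form_def fun_eq_iff)

lemma trace_form_diff:
  "trace_form k S (diff_form f g) = diff_form (trace_form k S f) (trace_form k S g)"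
  by (auto simp: trace_form_def diff_form_def fun_eq_iff)

lemma trace_form_UNIV:
  assumes "is_kform k \<omega>"
  shows "trace_form k UNIV \<omega> = \<omega>"
  using assms by (auto simp: trace_form_def is_kform_def std_simplex_def fun_eq_iff)

lemma form_subspace_zero: "form_subspace k A \<Longrightarrow> zero_form \<in> A"
  by (simp add: form_subspace_def)

lemma form_subspace_add: "form_subspace k A \<Longrightarrow> f \<in> A \<Longrightarrow> g \<in> A \<Longrightarrow> add_form f g \<in> A"
  by (simp add: form_subspace_def)

lemma form_subspace_diff:
  assumes "form_subspace k A" "f \<in> A" "g \<in> A"
  shows "diff_form f g \<in> A"
proof -
  have "diff_form f g = add_form f (scale_form (-1) g)"
    by (simp add: diff_form_def add_form_def scale_form_def)
  then show ?thesis
    using assms by (simp add: form_subspace_def)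
qed

lemma form_subspace_sum:
  assumes "form_subspace k A" "finite I" "\<And>i. i \<in> I \<Longrightarrow> f i \<in> A"
  shows "(\<lambda>x vs. \<Sum>i\<in>I. f i x vs) \<in> A"
  using assms(2,3)
proof (induction I rule: finite_induct)
  case empty
  have "(\<lambda>x vs. \<Sum>i\<in>{}. f i x vs) = zero_form"
    by (simp add: zero_form_def)
  then show ?case
    using form_subspace_zero[OF assms(1)] by simp
next
  case (insert a F)
  then have "(\<lambda>x vs. \<Sum>i\<in>insert a F. f i x vs) = add_form (f a) (\<lambda>x vs. \<Sum>i\<in>F. f i x vs)"
    by (simp add: add_form_def)
  then show ?case
    using insert form_subspace_add[OF assms(1)] by simp
qed

definition is_W_decomposition ::
    "nat \<Rightarrow> (nat \<Rightarrow> 'm::finite form set) \<Rightarrow> 'm form \<Rightarrow> (nat \<Rightarrow> 'm form) \<Rightarrow> bool" where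
  "is_W_decomposition n W \<alpha> w \<longleftrightarrow>
     (\<forall>d\<le>n. w d \<in> W d) \<and> (\<forall>d>n. w d = zero_form) \<and> \<alpha> = (\<lambda>x vs. \<Sum>d\<le>n. w d x vs)"

lemma is_W_decompositionD:
  assumes "is_W_decomposition n W \<alpha> w"
  shows "d \<le> n \<Longrightarrow> w d \<in> W d" "n < d \<Longrightarrow> w d = zero_form" "\<alpha> x vs = (\<Sum>d\<le>n. w d x vs)"
  using assms by (simp_all add: is_W_decomposition_def)

lemma is_W_decompositionI:
  assumes "\<And>d. d \<le> n \<Longrightarrow> w d \<in> W d" "\<And>d. n < d \<Longrightarrow> w d = zero_form"
    "\<And>x vs. \<alpha> x vs = (\<Sum>d\<le>n. w d x vs)"
  shows "is_W_decomposition n W \<alpha> w"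
  using assms by (auto simp: is_W_decomposition_def fun_eq_iff)

lemma W_components_eq_The: "W_components n W \<alpha> = (THE w. is_W_decomposition n W \<alpha> w)"
  by (simp add: W_components_def is_W_decomposition_def)

locale split_filtration =
  fixes k n :: nat and Vs :: "nat \<Rightarrow> 'm::finite form set" and W :: "nat \<Rightarrow> 'm form set"
  assumes direct_sum: "d \<le> n \<Longrightarrow> direct_sum_eq k (Vs d) (W d) (Vs (Suc d))"
    and top_trivial: "Vs (Suc n) \<subseteq> {zero_form}"
begin

lemma direct_sumD:
  assumes "d \<le> n"
  shows "form_subspace k (W d)" "form_subspace k (Vs (Suc d))"
    "W d \<inter> Vs (Suc d) = {zero_form}" "Vs d = {add_form a b | a b. a \<in> W d \<and> b \<in> Vs (Suc d)}"
  using direct_sum[OF assms] by (simp_all add: direct_sum_eq_def)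

lemma W_subset_Vs: "d \<le> n \<Longrightarrow> W d \<subseteq> Vs d"
  using direct_sumD form_subspace_zero
  by (fastforce simp: add_form_def zero_form_def)

lemma Vs_Suc_subset: "d \<le> n \<Longrightarrow> Vs (Suc d) \<subseteq> Vs d"
  using direct_sumD form_subspace_zero
  by (fastforce simp: add_form_def zero_form_def)

lemma Vs_antimono: "d \<le> e \<Longrightarrow> e \<le> Suc n \<Longrightarrow> Vs e \<subseteq> Vs d"
proof (induction e rule: dec_induct)
  case (step e)
  then show ?case
    using Vs_Suc_subset[of e] by auto
qed simp

lemma W_decomposition_exists:
  assumes "d \<le> Suc n" "\<alpha> \<in> Vs d"
  shows "\<exists>w. (\<forall>e<d. w e = zero_form) \<and> is_W_decomposition n W \<alpha> w"
  using assms
proof (induction d arbitrary: \<alpha> rule: inc_induct)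
  case base
  then have "\<alpha> = zero_form"
    using top_trivial by auto
  moreover have "is_W_decomposition n W zero_form (\<lambda>_. zero_form)"
    using direct_sumD(1) form_subspace_zero
    by (intro is_W_decompositionI) (auto simp: zero_form_def)
  ultimately show ?case
    by (intro exI[of _ "\<lambda>_. zero_form"]) simp
next
  case (step d)
  obtain a b where ab: "\<alpha> = add_form a b" "a \<in> W d" "b \<in> Vs (Suc d)"
    using step.prems direct_sumD(4)[of d] step.hyps by auto
  obtain w where w: "\<forall>e<Suc d. w e = zero_form" "is_W_decomposition n W b w"
    using step.IH[OF ab(3)] by blast
  have "is_W_decomposition n W \<alpha> (w(d := a))"
  proof (rule is_W_decompositionI)
    fix x vs
    have "(\<Sum>e\<le>n. (w(d := a)) e x vs) = (\<Sum>e\<le>n. w e x vs + (if e = d then a x vs else 0))"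
      using w(1) by (intro sum.cong) (auto simp: zero_form_def)
    also have "\<dots> = b x vs + a x vs"
      using is_W_decompositionD(3)[OF w(2), of x vs, symmetric] step.hyps
      by (simp add: sum.distrib)
    finally show "\<alpha> x vs = (\<Sum>e\<le>n. (w(d := a)) e x vs)"
      using ab(1) by (simp add: add_form_def)
  qed (use is_W_decompositionD[OF w(2)] ab(2) step.hyps in auto)
  moreover have "\<forall>e<d. (w(d := a)) e = zero_form"
    using w(1) by simp
  ultimately show ?case
    by blast
qed

text \<open>The \<open>d\<close>-th summand of a decomposition of zero is minus the sum of the later ones, which
  lies in \<open>V\<^sub>d\<^sub>+\<^sub>1\<close>; by induction on \<open>d\<close> the earlier summands already vanish.\<close>
lemma W_decomposition_of_zero:
  assumes u: "is_W_decomposition n W zero_form u"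
  shows "u = (\<lambda>_. zero_form)"
proof -
  have sum_zero: "(\<Sum>e\<le>n. u e x vs) = 0" for x vs
    using is_W_decompositionD(3)[OF u, of x vs, symmetric] by (simp add: zero_form_def)
  have "d \<le> n \<longrightarrow> u d = zero_form" for d
  proof (induction d rule: less_induct)
    case (less d)
    show ?case
    proof
      assume d: "d \<le> n"
      have earlier: "\<forall>e\<in>{..n} - insert d {Suc d..n}. u e x vs = 0" for x vs
      proof
        fix e assume "e \<in> {..n} - insert d {Suc d..n}"
        then have "e < d"
          by auto
        then show "u e x vs = 0"
          using less.IH d by (simp add: zero_form_def)
      qed
      have "(\<Sum>e\<le>n. u e x vs) = (\<Sum>e\<in>insert d {Suc d..n}. u e x vs)" for x vs
        using d by (intro sum.mono_neutral_right earlier) auto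
      then have "u d = diff_form zero_form (\<lambda>x vs. \<Sum>e\<in>{Suc d..n}. u e x vs)"
        using sum_zero by (simp add: diff_form_def zero_form_def fun_eq_iff eq_neg_iff_add_eq_0)
      also have "\<dots> \<in> Vs (Suc d)"
      proof (rule form_subspace_diff[OF direct_sumD(2)[OF d]])
        show "zero_form \<in> Vs (Suc d)"
          using form_subspace_zero[OF direct_sumD(2)[OF d]] .
        show "(\<lambda>x vs. \<Sum>e\<in>{Suc d..n}. u e x vs) \<in> Vs (Suc d)"
        proof (rule form_subspace_sum[OF direct_sumD(2)[OF d]])
          fix e assume e: "e \<in> {Suc d..n}"
          then have "u e \<in> Vs e"
            using is_W_decompositionD(1)[OF u] W_subset_Vs[of e] by auto
          then show "u e \<in> Vs (Suc d)"
            using e Vs_antimono[of "Suc d" e] by auto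
        qed simp
      qed
      finally show "u d = zero_form"
        using is_W_decompositionD(1)[OF u d] direct_sumD(3)[OF d] by auto
    qed
  qed
  then show ?thesis
    using is_W_decompositionD(2)[OF u] by (metis not_le)
qed

lemma W_decomposition_unique:
  assumes w: "is_W_decomposition n W \<alpha> w" and w': "is_W_decomposition n W \<alpha> w'"
  shows "w = w'"
proof -
  have "is_W_decomposition n W zero_form (\<lambda>d. diff_form (w d) (w' d))"
  proof (rule is_W_decompositionI)
    show "diff_form (w d) (w' d) \<in> W d" if "d \<le> n" for d
      using form_subspace_diff[OF direct_sumD(1)[OF that]]
        is_W_decompositionD(1)[OF w that] is_W_decompositionD(1)[OF w' that] .
    show "diff_form (w d) (w' d) = zero_form" if "n < d" for d
      using is_W_decompositionD(2)[OF w that] is_W_decompositionD(2)[OF w' that]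
      by (simp add: diff_form_eq_zero_iff)
    show "zero_form x vs = (\<Sum>d\<le>n. diff_form (w d) (w' d) x vs)" for x vs
      using is_W_decompositionD(3)[OF w, of x vs, symmetric]
        is_W_decompositionD(3)[OF w', of x vs, symmetric]
      by (simp add: zero_form_def diff_form_def sum_subtractf)
  qed
  then have "(\<lambda>d. diff_form (w d) (w' d)) = (\<lambda>_. zero_form)"
    by (rule W_decomposition_of_zero)
  then show ?thesis
    by (auto simp: fun_eq_iff diff_form_def zero_form_def)
qed

lemma W_components:
  assumes "\<alpha> \<in> Vs 0"
  shows "is_W_decomposition n W \<alpha> (W_components n W \<alpha>)"
proof -
  obtain w where w: "is_W_decomposition n W \<alpha> w"
    using W_decomposition_exists[of 0] assms by auto
  show ?thesis
    unfolding W_components_eq_The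
    by (rule theI[of _ w]) (use w W_decomposition_unique in blast)+
qed

lemma W_components_diff_in_W:
  assumes "\<alpha> \<in> Vs 0" "\<beta> \<in> Vs 0" "d \<le> n"
  shows "diff_form (W_components n W \<alpha> d) (W_components n W \<beta> d) \<in> W d"
  using form_subspace_diff[OF direct_sumD(1)[OF assms(3)]]
    is_W_decompositionD(1)[OF W_components[OF assms(1)] assms(3)]
    is_W_decompositionD(1)[OF W_components[OF assms(2)] assms(3)]
  by blast

lemma eq_if_W_components_diff_in_Vs_Suc:
  assumes "\<alpha> \<in> Vs 0" "\<beta> \<in> Vs 0"
    and "\<And>d. d \<le> n \<Longrightarrow> diff_form (W_components n W \<alpha> d) (W_components n W \<beta> d) \<in> Vs (Suc d)"
  shows "\<alpha> = \<beta>"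
proof -
  have "W_components n W \<alpha> d = W_components n W \<beta> d" if "d \<le> n" for d
  proof -
    have "diff_form (W_components n W \<alpha> d) (W_components n W \<beta> d) \<in> W d \<inter> Vs (Suc d)"
      using assms(3)[OF that] W_components_diff_in_W[OF assms(1,2) that] by blast
    then show ?thesis
      by (simp add: direct_sumD(3)[OF that] diff_form_eq_zero_iff)
  qed
  then have "(\<Sum>d\<le>n. W_components n W \<alpha> d x vs) = (\<Sum>d\<le>n. W_components n W \<beta> d x vs)" for x vs
    by (intro sum.cong) auto
  then show ?thesis
    using is_W_decompositionD(3)[OF W_components[OF assms(1)]]
      is_W_decompositionD(3)[OF W_components[OF assms(2)]]
    by (simp add: fun_eq_iff)
qed

end

lemma Vsub_0: "Vsub k V 0 = V"
  by (simp add: Vsub_def)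

lemma Vsub_subset: "Vsub k V d \<subseteq> V"
  by (auto simp: Vsub_def)

lemma Vsub_top_trivial:
  fixes V :: "'m::finite form set"
  assumes "CARD('m) = n + 1" "form_subspace k V"
  shows "Vsub k V (Suc n) \<subseteq> {zero_form}"
proof
  fix \<omega> assume \<omega>: "\<omega> \<in> Vsub k V (Suc n)"
  have "is_face (UNIV :: 'm set)" "face_dim (UNIV :: 'm set) + 1 = Suc n"
    using assms(1) by (simp_all add: is_face_def face_dim_def)
  then have "trace_form k UNIV \<omega> = zero_form"
    using \<omega> by (simp add: Vsub_def)
  moreover have "is_kform k \<omega>"
    using \<omega> assms(2) by (auto simp: Vsub_def form_subspace_def)
  ultimately show "\<omega> \<in> {zero_form}"
    by (simp add: trace_form_UNIV)
qed

theorem proposition3p10: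
  fixes V :: "'m::finite form set" and W :: "nat \<Rightarrow> 'm form set" and k n :: nat
  assumes "CARD('m) = n + 1"
    and "fin_dim_form_subspace k V"
    and "\<And>d. d \<le> n \<Longrightarrow> direct_sum_eq k (Vsub k V d) (W d) (Vsub k V (d + 1))"
  shows "inj_on (geom_decomp k n W) V"
proof -
  have V: "form_subspace k V"
    using assms(2) by (simp add: fin_dim_form_subspace_def)
  interpret split_filtration k n "Vsub k V" W
    using assms(3) Vsub_top_trivial[OF assms(1) V] by unfold_locales simp_all
  show ?thesis
  proof (rule inj_onI)
    fix \<alpha> \<beta> assume \<alpha>: "\<alpha> \<in> V" and \<beta>: "\<beta> \<in> V"
      and eq: "geom_decomp k n W \<alpha> = geom_decomp k n W \<beta>"
    show "\<alpha> = \<beta>"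
    proof (rule eq_if_W_components_diff_in_Vs_Suc)
      fix d assume d: "d \<le> n"
      let ?u = "diff_form (W_components n W \<alpha> d) (W_components n W \<beta> d)"
      have "?u \<in> V"
        using W_components_diff_in_W[of \<alpha> \<beta> d] W_subset_Vs[OF d] Vsub_subset[of k V d] \<alpha> \<beta> d
        by (auto simp: Vsub_0)
      moreover have "trace_form k S ?u = zero_form" if "is_face S" "face_dim S = d" for S
        using fun_cong[OF eq, of S] that
        by (simp add: geom_decomp_def trace_form_diff diff_form_eq_zero_iff)
      ultimately show "?u \<in> Vsub k V (Suc d)"
        by (auto simp: Vsub_def)
    qed (use \<alpha> \<beta> in \<open>simp_all add: Vsub_0\<close>)
  qed
qed

end
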